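(* Let $n\ge1$. Let $\mathbf{R}$ be a subalgebra of $\mathbf{P\L}_n\times\mathbf{P\L}_n$ with $\mathbf{R}\subseteq{\le}$. Assume $\mathbf{R}$ is not the diagonal $\{(s,s):s\in S\}$ of any subalgebra $\mathbf{S}$ of $\mathbf{P\L}_n$. Put $\mathbf{S}=\mathrm{pr}_1(\mathbf{R})\times\mathrm{pr}_2(\mathbf{R})$. If $(x,y)\in\mathbf{R}$, then $C_{(x,y),\mathbf{S}}\subseteq\mathbf{R}$.
   Context: For $n\ge 1$, the algebra $\mathbf{P\L}_n=\langle\{0,\tfrac1n,\dots,\tfrac{n-1}{n},1\},\wedge,\vee,\odot,\oplus,0,1\rangle$ has $\wedge=\min$, $\vee=\max$, $x\odot y=\max\{0,x+y-1\}$ and $x\oplus y=\min\{1,x+y\}$. The order is ${\le}=\{(x,y): x\le y\}\subseteq\mathbf{P\L}_n^2$. Let $\mathbf{S}=\mathbf{S}_1\times\mathbf{S}_2$ be a product of subalgebras of $\mathbf{P\L}_n$, and let $(x,y)\in\mathbf{S}$ with $x\le y$. Define $$C_{(x,y),\mathbf{S}}=\{(x',y')\in \mathbf{S}: x'\le x\text{ and }y\le y'\}.$$ *)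

theory Defs
  imports Main "HOL.Rat"
begin

definition PL :: "nat \<Rightarrow> rat set" where
  "PL n = {of_nat k / of_nat n | k. k \<le> n}"

definition luk_odot :: "rat \<Rightarrow> rat \<Rightarrow> rat" where
  "luk_odot x y = max 0 (x + y - 1)"

definition luk_oplus :: "rat \<Rightarrow> rat \<Rightarrow> rat" where
  "luk_oplus x y = min 1 (x + y)"

definition subalg :: "nat \<Rightarrow> rat set \<Rightarrow> bool" where
  "subalg n S \<longleftrightarrow> S \<subseteq> PL n \<and> 0 \<in> S \<and> 1 \<in> S \<and>
     (\<forall>x\<in>S. \<forall>y\<in>S. min x y \<in> S \<and> max x y \<in> S \<and> luk_odot x y \<in> S \<and> luk_oplus x y \<in> S)"

definition subalg2 :: "nat \<Rightarrow> (rat \<times> rat) set \<Rightarrow> bool" where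
  "subalg2 n R \<longleftrightarrow> R \<subseteq> PL n \<times> PL n \<and> (0, 0) \<in> R \<and> (1, 1) \<in> R \<and>
     (\<forall>(x1, y1)\<in>R. \<forall>(x2, y2)\<in>R.
        (min x1 x2, min y1 y2) \<in> R \<and> (max x1 x2, max y1 y2) \<in> R \<and>
        (luk_odot x1 x2, luk_odot y1 y2) \<in> R \<and> (luk_oplus x1 x2, luk_oplus y1 y2) \<in> R)"

definition Cset :: "rat \<times> rat \<Rightarrow> (rat \<times> rat) set \<Rightarrow> (rat \<times> rat) set" where
  "Cset p S = {(x', y') \<in> S. x' \<le> fst p \<and> snd p \<le> y'}"

end

theory Submission
  imports Defs
begin

text \<open>Since \<open>R\<close> is not a diagonal, it contains a pair \<open>(a, b)\<close> with \<open>a < b\<close>. Doubling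
  with \<open>\<oplus>\<close> and \<open>\<odot>\<close> sends a pair with gap \<open>d = b - a\<close> to a pair with gap at least
  \<open>min 1 (2 d)\<close>, so a pair of maximal gap in the finite set \<open>R\<close> has gap \<open>1\<close>, i.e. \<open>(0, 1) \<in> R\<close>.
  Joining and meeting with \<open>(0, 1)\<close> then moves first coordinates down and second
  coordinates up independently, which fills in \<open>Cset (x, y) S\<close>.\<close>

lemma PL_bounds:
  assumes "z \<in> PL n" shows "0 \<le> z \<and> z \<le> 1"
proof -
  obtain k where "z = of_nat k / of_nat n" "k \<le> n" using assms unfolding PL_def by blast
  then show ?thesis by (cases "n = 0") (auto simp: divide_le_eq_1)
qed

lemma finite_PL: "finite (PL n)"
proof -
  have "PL n = (\<lambda>k. of_nat k / of_nat n) ` {..n}" unfolding PL_def by auto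
  then show ?thesis by simp
qed

lemma subalg2_bounds:
  assumes "subalg2 n R" "(a, b) \<in> R"
  shows "0 \<le> a \<and> a \<le> 1 \<and> 0 \<le> b \<and> b \<le> 1"
  using assms PL_bounds unfolding subalg2_def by blast

lemma finite_subalg2: "subalg2 n R \<Longrightarrow> finite R"
  unfolding subalg2_def using finite_PL finite_subset by blast

lemma subalg2_closed:
  assumes "subalg2 n R" "(a, b) \<in> R" "(c, d) \<in> R"
  shows subalg2_min: "(min a c, min b d) \<in> R"
    and subalg2_max: "(max a c, max b d) \<in> R"
    and subalg2_odot: "(luk_odot a c, luk_odot b d) \<in> R"
    and subalg2_oplus: "(luk_oplus a c, luk_oplus b d) \<in> R"
  using assms unfolding subalg2_def by fast+

lemma subalg2_double:
  assumes "subalg2 n R" "(a, b) \<in> R"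
  shows subalg2_double_up: "(min 1 (2 * a), min 1 (2 * b)) \<in> R"
    and subalg2_double_down: "(max 0 (2 * a - 1), max 0 (2 * b - 1)) \<in> R"
  using subalg2_oplus[OF assms assms(2)] subalg2_odot[OF assms assms(2)]
  by (simp_all add: luk_oplus_def luk_odot_def flip: mult_2)

lemma subalg2_gap_doubling_straddle:
  assumes "subalg2 n R" "(a, b) \<in> R" "a < 1/2" "1/2 < b"
  shows "\<exists>a' b'. (a', b') \<in> R \<and> min 1 (2 * (b - a)) \<le> b' - a'"
proof -
  have lower: "(2 * a, 1) \<in> R"
    using subalg2_double_up[OF assms(1,2)] assms(3,4) by (simp add: min_def)
  have upper: "(0, 2 * b - 1) \<in> R"
    using subalg2_double_down[OF assms(1,2)] assms(3,4) by (simp add: max_def)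
  \<comment> \<open>The gaps \<open>1 - 2 a\<close> and \<open>2 b - 1\<close> add up to \<open>2 (b - a)\<close>; doubling the wider one suffices.\<close>
  show ?thesis
  proof (cases "a + b \<le> 1")
    case True
    have "(max 0 (4 * a - 1), 1) \<in> R"
      using subalg2_double_down[OF assms(1) lower] by simp
    moreover have "min 1 (2 * (b - a)) \<le> 1 - max 0 (4 * a - 1)"
      using True by (simp add: max_def min_def)
    ultimately show ?thesis by blast
  next
    case False
    have "(0, min 1 (4 * b - 2)) \<in> R"
      using subalg2_double_up[OF assms(1) upper] by simp
    moreover have "min 1 (2 * (b - a)) \<le> min 1 (4 * b - 2) - 0"
      using False by (simp add: min_def)
    ultimately show ?thesis by blast
  qed
qed

lemma subalg2_gap_doubling:
  assumes "subalg2 n R" "(a, b) \<in> R" "a \<le> b"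
  shows "\<exists>a' b'. (a', b') \<in> R \<and> min 1 (2 * (b - a)) \<le> b' - a'"
proof -
  consider "b \<le> 1/2" | "1/2 \<le> a" | "a < 1/2" "1/2 < b" by linarith
  then show ?thesis
  proof cases
    case 1
    then have "min 1 (2 * a) = 2 * a" "min 1 (2 * b) = 2 * b" using assms(3) by auto
    then have "(2 * a, 2 * b) \<in> R" using subalg2_double_up[OF assms(1,2)] by simp
    then show ?thesis by force
  next
    case 2
    then have "max 0 (2 * a - 1) = 2 * a - 1" "max 0 (2 * b - 1) = 2 * b - 1" using assms(3) by auto
    then have "(2 * a - 1, 2 * b - 1) \<in> R" using subalg2_double_down[OF assms(1,2)] by simp
    then show ?thesis by force
  next
    case 3
    then show ?thesis using subalg2_gap_doubling_straddle[OF assms(1,2)] by blast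
  qed
qed

lemma subalg2_zero_one:
  assumes "subalg2 n R" "(a, b) \<in> R" "a < b"
  shows "(0, 1) \<in> R"
proof -
  define gap where "gap = (\<lambda>p :: rat \<times> rat. snd p - fst p)"
  have "finite R" using finite_subalg2[OF assms(1)] .
  obtain c d where cd: "(c, d) \<in> R" and cd_max: "\<And>q. q \<in> R \<Longrightarrow> gap q \<le> d - c"
  proof -
    have "Max (gap ` R) \<in> gap ` R" using \<open>finite R\<close> assms(2) by (intro Max_in) auto
    then obtain p where "p \<in> R" "gap p = Max (gap ` R)" by auto
    moreover have "gap q \<le> Max (gap ` R)" if "q \<in> R" for q
      using \<open>finite R\<close> that by simp
    ultimately show thesis using that[of "fst p" "snd p"] unfolding gap_def by simp
  qed
  have "0 < d - c" using cd_max[OF assms(2)] assms(3) unfolding gap_def by simp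
  obtain c' d' where "(c', d') \<in> R" "min 1 (2 * (d - c)) \<le> d' - c'"
    using subalg2_gap_doubling[OF assms(1) cd] \<open>0 < d - c\<close> by auto
  moreover have "d' - c' \<le> d - c" using cd_max[OF calculation(1)] unfolding gap_def by simp
  ultimately have "1 \<le> d - c" using \<open>0 < d - c\<close> by (simp add: min_le_iff_disj)
  then have "c = 0" "d = 1" using subalg2_bounds[OF assms(1) cd] by auto
  then show ?thesis using cd by simp
qed

lemma subalg2_diagonal:
  assumes "subalg2 n R" "\<And>a b. (a, b) \<in> R \<Longrightarrow> a = b"
  shows "subalg n (fst ` R) \<and> R = {(s, s) | s. s \<in> fst ` R}"
proof
  have mem: "s \<in> fst ` R \<longleftrightarrow> (s, s) \<in> R" for s using assms(2) by force
  show "R = {(s, s) | s. s \<in> fst ` R}" using assms(2) by force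
  show "subalg n (fst ` R)"
    unfolding subalg_def
  proof (intro conjI ballI)
    show "fst ` R \<subseteq> PL n" "0 \<in> fst ` R" "1 \<in> fst ` R"
      using assms(1) mem unfolding subalg2_def by auto
  next
    fix s t assume "s \<in> fst ` R" "t \<in> fst ` R"
    then have st: "(s, s) \<in> R" "(t, t) \<in> R" using mem by auto
    show "min s t \<in> fst ` R" "max s t \<in> fst ` R"
      "luk_odot s t \<in> fst ` R" "luk_oplus s t \<in> fst ` R"
      using subalg2_closed[OF assms(1) st] mem by blast+
  qed
qed

lemma subalg2_Cset_subset:
  assumes "subalg2 n R" "(0, 1) \<in> R" "(x, y) \<in> R"
  shows "Cset (x, y) (fst ` R \<times> snd ` R) \<subseteq> R"
proof
  fix p assume "p \<in> Cset (x, y) (fst ` R \<times> snd ` R)"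
  then obtain x' y' u v where p: "p = (x', y')" "(x', u) \<in> R" "(v, y') \<in> R" "x' \<le> x" "y \<le> y'"
    unfolding Cset_def by force
  have "(max x' 0, max u 1) \<in> R" using subalg2_max[OF assms(1) p(2) assms(2)] .
  then have x'_1: "(x', 1) \<in> R" using subalg2_bounds[OF assms(1) p(2)] by (simp add: max_absorb1 max_absorb2)
  have "(min v 0, min y' 1) \<in> R" using subalg2_min[OF assms(1) p(3) assms(2)] .
  then have "(0, y') \<in> R" using subalg2_bounds[OF assms(1) p(3)] by (simp add: min_absorb1 min_absorb2)
  from subalg2_max[OF assms(1) assms(3) this] have x_y': "(x, y') \<in> R"
    using subalg2_bounds[OF assms(1,3)] p(5) by (simp add: max_absorb1 max_absorb2)
  from subalg2_min[OF assms(1) x'_1 x_y'] show "p \<in> R"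
    using p(1,4) subalg2_bounds[OF assms(1) p(3)] by (simp add: min_absorb1 min_absorb2)
qed

theorem lemma3p11:
  fixes n :: nat and R :: "(rat \<times> rat) set" and x y :: rat
  assumes "n \<ge> 1"
    and "subalg2 n R"
    and "R \<subseteq> {(a, b). a \<le> b}"
    and "\<not> (\<exists>S. subalg n S \<and> R = {(s, s) | s. s \<in> S})"
    and "(x, y) \<in> R"
  shows "Cset (x, y) (fst ` R \<times> snd ` R) \<subseteq> R"
proof -
  obtain a b where "(a, b) \<in> R" "a \<noteq> b"
    using subalg2_diagonal[OF assms(2)] assms(4) by blast
  then have "(a, b) \<in> R" "a < b" using assms(3) by force+
  then have "(0, 1) \<in> R" using subalg2_zero_one[OF assms(2)] by blast
  then show ?thesis using subalg2_Cset_subset[OF assms(2) _ assms(5)] by blast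
qed

end
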